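(* Let $K$ be a field, $S=K[x_1,\ldots,x_n]$, and let $I\subset S$ be any monomial ideal minimally generated by $q$ monomials. Then $\operatorname{pd}_S(I^2)\le\dim(\mathbb{M}_q^2)=\binom{q}{2}$.
   Context: $\operatorname{pd}_S$ denotes projective dimension over $S$ (length of the minimal free resolution). $\mathbb{M}_q^2$ is the simplicial complex on vertex set $\{\ell_{i,j}:1\le i\le j\le q\}$ with facets $\mathcal{M}_i=\{\ell_{a,b}:1\le a<b\le q\}\cup\{\ell_{i,i}\}$ for $i\in[q]$; its dimension is the maximal size of a face minus one. *)

theory Defs
  imports Main "HOL-Library.Poly_Mapping"
begin

text \<open>Polynomials over a field K in variables x_0, x_1, ...: finitely supported maps from
  exponent vectors (monomials) to coefficients; multiplication is the library convolution.\<close>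
type_synonym 'a mpoly = "(nat \<Rightarrow>\<^sub>0 nat) \<Rightarrow>\<^sub>0 'a"

definition polyring :: "nat \<Rightarrow> 'a::comm_ring_1 mpoly set" where
  "polyring n = {p. \<forall>m \<in> Poly_Mapping.keys p. Poly_Mapping.keys m \<subseteq> {..<n}}"

definition monomials :: "nat \<Rightarrow> 'a::comm_ring_1 mpoly set" where
  "monomials n = {Poly_Mapping.single m 1 | m. Poly_Mapping.keys m \<subseteq> {..<n}}"

definition ideal_gen :: "nat \<Rightarrow> 'a::comm_ring_1 mpoly set \<Rightarrow> 'a mpoly set" where
  "ideal_gen n G = {(\<Sum>g\<in>H. c g * g) | H c. finite H \<and> H \<subseteq> G \<and> (\<forall>g\<in>H. c g \<in> polyring n)}"

definition ideal_sq :: "nat \<Rightarrow> 'a::comm_ring_1 mpoly set \<Rightarrow> 'a mpoly set" where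
  "ideal_sq n I = ideal_gen n {a * b | a b. a \<in> I \<and> b \<in> I}"

text \<open>The free module S^r, as functions nat => S vanishing from index r on.\<close>
definition vecs :: "nat \<Rightarrow> nat \<Rightarrow> (nat \<Rightarrow> 'a::comm_ring_1 mpoly) set" where
  "vecs n r = {v. (\<forall>j<r. v j \<in> polyring n) \<and> (\<forall>j\<ge>r. v j = 0)}"

definition mapply :: "(nat \<Rightarrow> nat \<Rightarrow> 'a::comm_ring_1) \<Rightarrow> nat \<Rightarrow> nat \<Rightarrow> (nat \<Rightarrow> 'a) \<Rightarrow> (nat \<Rightarrow> 'a)" where
  "mapply A m r v = (\<lambda>j. if j < m then (\<Sum>k<r. A j k * v k) else 0)"

text \<open>A finite free resolution of length len of an ideal J of S:
  0 -> S^(r len) -A len-> ... -A 1-> S^(r 0) -eps-> J -> 0 exact.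
  Matrix A i has r (i-1) rows and r i columns; eps is the augmentation row.\<close>
definition free_resolution ::
  "nat \<Rightarrow> 'a::comm_ring_1 mpoly set \<Rightarrow> nat \<Rightarrow> (nat \<Rightarrow> nat)
    \<Rightarrow> (nat \<Rightarrow> nat \<Rightarrow> nat \<Rightarrow> 'a mpoly) \<Rightarrow> (nat \<Rightarrow> 'a mpoly) \<Rightarrow> bool" where
  "free_resolution n J len r A eps \<longleftrightarrow>
     (\<forall>i\<in>{1..len}. \<forall>j<r (i - 1). \<forall>k<r i. A i j k \<in> polyring n) \<and>
     (\<forall>k<r 0. eps k \<in> polyring n) \<and>
     (\<lambda>v. \<Sum>k<r 0. eps k * v k) ` vecs n (r 0) = J \<and>
     (\<forall>i\<le>len.
        {v \<in> vecs n (r i).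
           (if i = 0 then (\<Sum>k<r 0. eps k * v k) = 0
            else mapply (A i) (r (i - 1)) (r i) v = (\<lambda>_. 0))}
        = (if i < len then mapply (A (Suc i)) (r i) (r (Suc i)) ` vecs n (r (Suc i))
           else {\<lambda>_. 0}))"

definition pd :: "nat \<Rightarrow> 'a::comm_ring_1 mpoly set \<Rightarrow> nat" where
  "pd n J = (LEAST len. \<exists>r A eps. free_resolution n J len r A eps)"

text \<open>The simplicial complex M_q^2 on vertices l_{i,j} = (i,j), 1 <= i <= j <= q.\<close>
definition Mq2_facet :: "nat \<Rightarrow> nat \<Rightarrow> (nat \<times> nat) set" where
  "Mq2_facet q i = {(a, b). 1 \<le> a \<and> a < b \<and> b \<le> q} \<union> {(i, i)}"

definition Mq2 :: "nat \<Rightarrow> (nat \<times> nat) set set" where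
  "Mq2 q = {F. \<exists>i\<in>{1..q}. F \<subseteq> Mq2_facet q i}"

definition sc_dim :: "'v set set \<Rightarrow> int" where
  "sc_dim D = int (Max (card ` D)) - 1"

end

theory Submission
  imports Defs "HOL-Library.Product_Lexorder"
begin

text \<open>Let \<open>m\<^sub>1, \<dots>, m\<^sub>q\<close> be the monomial generators of \<open>I\<close>; label the vertex \<open>l\<^sub>i\<^sub>j\<close> of
  \<open>M\<^sub>q\<^sup>2\<close> by \<open>m\<^sub>i m\<^sub>j\<close> and each face by the lcm of its vertex labels. The vertex labels generate
  \<open>I\<^sup>2\<close>. The homogenised chain complex of a labelled simplicial complex resolves the ideal of its
  vertex labels as soon as, for every \<open>x\<^sup>b\<close>, the faces whose label divides \<open>x\<^sup>b\<close> form a cone or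
  contain no vertex: in multidegree \<open>b\<close> the complex is the scalar chain complex of that
  subcomplex, which coning off with the apex contracts. The resolution has length
  \<open>dim M\<^sub>q\<^sup>2 = q choose 2\<close>. For \<open>M\<^sub>q\<^sup>2\<close> the apex can be taken to be \<open>l\<^sub>i\<^sub>j\<close> if \<open>m\<^sub>i\<^sup>2\<close> and
  \<open>m\<^sub>j\<^sup>2\<close> divide \<open>x\<^sup>b\<close> for some \<open>i \<noteq> j\<close>, the unique such \<open>l\<^sub>i\<^sub>i\<close> if there is exactly one,
  and otherwise any vertex of a face below \<open>x\<^sup>b\<close>, which is then off-diagonal.\<close>

section \<open>Exponent vectors\<close>

text \<open>Divisibility \<open>x\<^sup>a | x\<^sup>b\<close> of monomials is the pointwise order on exponent vectors; the
  library order on \<open>nat \<Rightarrow>\<^sub>0 nat\<close> is lexicographic and does not serve.\<close>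
definition exp_dvd :: "(nat \<Rightarrow>\<^sub>0 nat) \<Rightarrow> (nat \<Rightarrow>\<^sub>0 nat) \<Rightarrow> bool" where
  "exp_dvd a b \<longleftrightarrow> (\<forall>k. Poly_Mapping.lookup a k \<le> Poly_Mapping.lookup b k)"

lemma exp_dvd_trans: "exp_dvd a b \<Longrightarrow> exp_dvd b c \<Longrightarrow> exp_dvd a c"
  unfolding exp_dvd_def using le_trans by blast

lemma exp_dvd_add_self:
  assumes "exp_dvd (a + a) b" "exp_dvd (c + c) b"
  shows "exp_dvd (a + c) b"
  unfolding exp_dvd_def
proof
  fix k
  show "Poly_Mapping.lookup (a + c) k \<le> Poly_Mapping.lookup b k"
    using assms unfolding exp_dvd_def lookup_add by (metis add_le_mono nat_le_linear order.trans)
qed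

lemma exp_dvd_diff_iff: "exp_dvd c a \<Longrightarrow> exp_dvd c b \<Longrightarrow> exp_dvd (a - c) (b - c) \<longleftrightarrow> exp_dvd a b"
  unfolding exp_dvd_def by (auto simp: lookup_minus) (meson diff_le_mono le_diff_iff)+

lemma diff_diff_exp: "exp_dvd c a \<Longrightarrow> exp_dvd a b \<Longrightarrow> (b - c) - (a - c) = b - a"
  unfolding exp_dvd_def by (intro poly_mapping_eqI) (simp add: lookup_minus)

lemma diff_add_exp: "exp_dvd a b \<Longrightarrow> (b - a) + a = b"
  unfolding exp_dvd_def by (intro poly_mapping_eqI) (simp add: lookup_minus lookup_add)

lemma keys_add_exp: "Poly_Mapping.keys (a + b) = Poly_Mapping.keys a \<union> Poly_Mapping.keys (b :: nat \<Rightarrow>\<^sub>0 nat)"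
  by (auto simp: in_keys_iff lookup_add)

lemma keys_diff_exp: "Poly_Mapping.keys (a - b) \<subseteq> Poly_Mapping.keys (a :: nat \<Rightarrow>\<^sub>0 nat)"
  by (auto simp: in_keys_iff lookup_minus)

lemma lookup_single_times:
  fixes p :: "'a::comm_ring_1 mpoly"
  shows "Poly_Mapping.lookup (Poly_Mapping.single a c * p) b =
    (if exp_dvd a b then c * Poly_Mapping.lookup p (b - a) else 0)"
proof -
  have shift: "b = a + d \<longleftrightarrow> exp_dvd a b \<and> d = b - a" for d
    by (auto simp: exp_dvd_def poly_mapping_eq_iff fun_eq_iff lookup_add lookup_minus)
  have "Poly_Mapping.lookup (Poly_Mapping.single a c * p) b =
      c * (\<Sum>d. Poly_Mapping.lookup p d when b = a + d)"
    by (simp add: lookup_mult lookup_single when_mult)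
  also have "\<dots> = (if exp_dvd a b then c * Poly_Mapping.lookup p (b - a) else 0)"
    unfolding shift by (simp add: conj_commute)
  finally show ?thesis .
qed

section \<open>Polynomial rings and ideals\<close>

lemma polyring_zero [simp]: "0 \<in> polyring n"
  by (simp add: polyring_def)

lemma polyring_add: "p \<in> polyring n \<Longrightarrow> q \<in> polyring n \<Longrightarrow> p + q \<in> polyring n"
  unfolding polyring_def using keys_add[of p q] by auto

lemma polyring_mult:
  assumes "p \<in> polyring n" "q \<in> polyring n"
  shows "p * q \<in> polyring n"
  unfolding polyring_def
proof (intro CollectI ballI)
  fix m assume "m \<in> Poly_Mapping.keys (p * q)"
  then obtain a b where "m = a + b" "a \<in> Poly_Mapping.keys p" "b \<in> Poly_Mapping.keys q"
    using keys_mult[of p q] by blast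
  then show "Poly_Mapping.keys m \<subseteq> {..<n}" using assms by (auto simp: polyring_def keys_add_exp)
qed

lemma polyring_sum: "(\<And>i. i \<in> A \<Longrightarrow> f i \<in> polyring n) \<Longrightarrow> sum f A \<in> polyring n"
  by (induction A rule: infinite_finite_induct) (auto intro: polyring_add)

lemma polyring_single: "Poly_Mapping.keys a \<subseteq> {..<n} \<Longrightarrow> Poly_Mapping.single a c \<in> polyring n"
  by (simp add: polyring_def)

lemma ideal_gen_zero: "0 \<in> ideal_gen n X"
  unfolding ideal_gen_def by (rule CollectI, rule exI[of _ "{}"]) auto

lemma ideal_gen_add:
  assumes "a \<in> ideal_gen n X" "b \<in> ideal_gen n X"
  shows "a + b \<in> ideal_gen n X"
proof -
  obtain H1 c1 where 1: "a = (\<Sum>g\<in>H1. c1 g * g)" "finite H1" "H1 \<subseteq> X" "\<forall>g\<in>H1. c1 g \<in> polyring n"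
    using assms(1) unfolding ideal_gen_def by blast
  obtain H2 c2 where 2: "b = (\<Sum>g\<in>H2. c2 g * g)" "finite H2" "H2 \<subseteq> X" "\<forall>g\<in>H2. c2 g \<in> polyring n"
    using assms(2) unfolding ideal_gen_def by blast
  define c where "c g = (if g \<in> H1 then c1 g else 0) + (if g \<in> H2 then c2 g else 0)" for g
  have "(\<Sum>g\<in>H1 \<union> H2. c g * g) =
      (\<Sum>g\<in>H1 \<union> H2. if g \<in> H1 then c1 g * g else 0) + (\<Sum>g\<in>H1 \<union> H2. if g \<in> H2 then c2 g * g else 0)"
    unfolding c_def by (simp add: sum.distrib[symmetric] distrib_right if_distrib[of "\<lambda>x. x * _"] cong: if_cong)
  also have "\<dots> = a + b"
    using 1 2 by (simp add: sum.If_cases Int_absorb1)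
  finally have "a + b = (\<Sum>g\<in>H1 \<union> H2. c g * g)" ..
  moreover have "\<forall>g\<in>H1 \<union> H2. c g \<in> polyring n"
    using 1(4) 2(4) by (auto simp: c_def intro!: polyring_add)
  ultimately show ?thesis using 1(2,3) 2(2,3) unfolding ideal_gen_def by blast
qed

lemma ideal_gen_mult:
  assumes "p \<in> polyring n" "a \<in> ideal_gen n X"
  shows "p * a \<in> ideal_gen n X"
proof -
  obtain H c where 1: "a = (\<Sum>g\<in>H. c g * g)" "finite H" "H \<subseteq> X" "\<forall>g\<in>H. c g \<in> polyring n"
    using assms(2) unfolding ideal_gen_def by blast
  have "p * a = (\<Sum>g\<in>H. (p * c g) * g)" unfolding 1(1) by (simp add: sum_distrib_left mult.assoc)
  moreover have "\<forall>g\<in>H. p * c g \<in> polyring n" using 1(4) assms(1) by (simp add: polyring_mult)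
  ultimately show ?thesis using 1(2,3) unfolding ideal_gen_def mem_Collect_eq
    by (intro exI[of _ H] exI[of _ "\<lambda>g. p * c g"]) simp
qed

lemma ideal_gen_generator: "g \<in> X \<Longrightarrow> g \<in> ideal_gen n X"
  unfolding ideal_gen_def
  by (rule CollectI, rule exI[of _ "{g}"], rule exI[of _ "\<lambda>_. 1"]) (simp add: polyring_def)

lemma ideal_gen_sum: "(\<And>i. i \<in> A \<Longrightarrow> f i \<in> ideal_gen n X) \<Longrightarrow> sum f A \<in> ideal_gen n X"
  by (induction A rule: infinite_finite_induct) (auto intro: ideal_gen_zero ideal_gen_add)

lemma ideal_gen_subset:
  assumes "X \<subseteq> ideal_gen n Y"
  shows "ideal_gen n X \<subseteq> ideal_gen n Y"
proof
  fix a assume "a \<in> ideal_gen n X"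
  then obtain H c where a: "a = (\<Sum>g\<in>H. c g * g)" "H \<subseteq> X" "\<forall>g\<in>H. c g \<in> polyring n"
    unfolding ideal_gen_def by blast
  show "a \<in> ideal_gen n Y"
    unfolding a(1) using a(2,3) assms by (intro ideal_gen_sum ideal_gen_mult) auto
qed

lemma ideal_gen_mono: "X \<subseteq> Y \<Longrightarrow> ideal_gen n X \<subseteq> ideal_gen n Y"
  by (rule ideal_gen_subset) (use ideal_gen_generator in blast)

lemma ideal_gen_image:
  assumes "finite A"
  shows "ideal_gen n (f ` A) = {\<Sum>a\<in>A. c a * f a | c. \<forall>a\<in>A. c a \<in> polyring n}"
proof
  have "(\<Sum>a\<in>A. c a * f a) \<in> ideal_gen n (f ` A)" if "\<forall>a\<in>A. c a \<in> polyring n" for c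
  proof (rule ideal_gen_sum)
    fix a assume "a \<in> A"
    then have "c a \<in> polyring n" "f a \<in> f ` A"
      using that by auto
    then show "c a * f a \<in> ideal_gen n (f ` A)"
      by (rule ideal_gen_mult[OF _ ideal_gen_generator])
  qed
  then show "{\<Sum>a\<in>A. c a * f a | c. \<forall>a\<in>A. c a \<in> polyring n} \<subseteq> ideal_gen n (f ` A)"
    by blast
next
  show "ideal_gen n (f ` A) \<subseteq> {\<Sum>a\<in>A. c a * f a | c. \<forall>a\<in>A. c a \<in> polyring n}"
  proof
    fix x assume "x \<in> ideal_gen n (f ` A)"
    then obtain H c where x: "x = (\<Sum>g\<in>H. c g * g)" "H \<subseteq> f ` A" "\<forall>g\<in>H. c g \<in> polyring n"
      unfolding ideal_gen_def by blast
    define \<sigma> where "\<sigma> = inv_into A f"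
    have \<sigma>: "\<sigma> ` H \<subseteq> A" "inj_on \<sigma> H" "\<And>g. g \<in> H \<Longrightarrow> f (\<sigma> g) = g"
      using x(2) by (auto simp: \<sigma>_def inv_into_into f_inv_into_f inj_on_inv_into)
    define c' where "c' a = (if a \<in> \<sigma> ` H then c (f a) else 0)" for a
    have "(\<Sum>a\<in>A. c' a * f a) = (\<Sum>a\<in>\<sigma> ` H. c (f a) * f a)"
      using \<sigma>(1) assms by (simp add: c'_def if_distrib[of "\<lambda>t. t * _"] sum.If_cases Int_absorb1)
    also have "\<dots> = x"
      using \<sigma> by (simp add: sum.reindex x(1))
    finally show "x \<in> {\<Sum>a\<in>A. c a * f a | c. \<forall>a\<in>A. c a \<in> polyring n}"
      using x(3) \<sigma>(3) by (auto simp: c'_def intro!: exI[of _ c'])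
  qed
qed

lemma ideal_gen_times_generator:
  assumes "a \<in> ideal_gen n X" "g \<in> Y"
  shows "a * g \<in> ideal_gen n {x * y | x y. x \<in> X \<and> y \<in> Y}"
proof -
  obtain H c where a: "a = (\<Sum>h\<in>H. c h * h)" "H \<subseteq> X" "\<forall>h\<in>H. c h \<in> polyring n"
    using assms(1) unfolding ideal_gen_def by blast
  have "a * g = (\<Sum>h\<in>H. c h * (h * g))" unfolding a(1) by (simp add: sum_distrib_right mult.assoc)
  also have "\<dots> \<in> ideal_gen n {x * y | x y. x \<in> X \<and> y \<in> Y}"
  proof (rule ideal_gen_sum)
    fix h assume "h \<in> H"
    then show "c h * (h * g) \<in> ideal_gen n {x * y | x y. x \<in> X \<and> y \<in> Y}"
      using a(2,3) assms(2) by (intro ideal_gen_mult ideal_gen_generator) auto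
  qed
  finally show ?thesis .
qed

lemma ideal_sq_ideal_gen: "ideal_sq n (ideal_gen n X) = ideal_gen n {a * b | a b. a \<in> X \<and> b \<in> X}"
proof
  show "ideal_gen n {a * b | a b. a \<in> X \<and> b \<in> X} \<subseteq> ideal_sq n (ideal_gen n X)"
    unfolding ideal_sq_def by (rule ideal_gen_mono) (use ideal_gen_generator in blast)
next
  have "a * b \<in> ideal_gen n {x * y | x y. x \<in> X \<and> y \<in> X}"
    if a: "a \<in> ideal_gen n X" and b: "b \<in> ideal_gen n X" for a b
  proof -
    obtain H c where b: "b = (\<Sum>h\<in>H. c h * h)" "H \<subseteq> X" "\<forall>h\<in>H. c h \<in> polyring n"
      using b unfolding ideal_gen_def by blast
    have "a * b = (\<Sum>h\<in>H. c h * (a * h))" unfolding b(1) by (simp add: sum_distrib_left ac_simps)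
    also have "\<dots> \<in> ideal_gen n {x * y | x y. x \<in> X \<and> y \<in> X}"
    proof (rule ideal_gen_sum)
      fix h assume "h \<in> H"
      then show "c h * (a * h) \<in> ideal_gen n {x * y | x y. x \<in> X \<and> y \<in> X}"
        using b(2,3) a by (intro ideal_gen_mult ideal_gen_times_generator) auto
    qed
    finally show ?thesis .
  qed
  then show "ideal_sq n (ideal_gen n X) \<subseteq> ideal_gen n {a * b | a b. a \<in> X \<and> b \<in> X}"
    unfolding ideal_sq_def by (intro ideal_gen_subset) blast
qed

section \<open>Least common multiples of labels and incidence signs\<close>

definition lcm_label :: "('v \<Rightarrow> (nat \<Rightarrow>\<^sub>0 nat)) \<Rightarrow> 'v set \<Rightarrow> (nat \<Rightarrow>\<^sub>0 nat)" where
  "lcm_label e F = Abs_poly_mapping (\<lambda>k. Max (insert 0 ((\<lambda>v. Poly_Mapping.lookup (e v) k) ` F)))"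

lemma lookup_lcm_label:
  assumes "finite F"
  shows "Poly_Mapping.lookup (lcm_label e F) k = Max (insert 0 ((\<lambda>v. Poly_Mapping.lookup (e v) k) ` F))"
proof -
  let ?M = "\<lambda>k. Max (insert 0 ((\<lambda>v. Poly_Mapping.lookup (e v) k) ` F))"
  have "{k. ?M k \<noteq> 0} \<subseteq> (\<Union>v\<in>F. Poly_Mapping.keys (e v))"
  proof
    fix k assume "k \<in> {k. ?M k \<noteq> 0}"
    moreover have "?M k \<in> insert 0 ((\<lambda>v. Poly_Mapping.lookup (e v) k) ` F)"
      using assms by (intro Max_in) auto
    ultimately show "k \<in> (\<Union>v\<in>F. Poly_Mapping.keys (e v))" by (auto simp: in_keys_iff)
  qed
  moreover have "finite (\<Union>v\<in>F. Poly_Mapping.keys (e v))"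
    using assms by simp
  ultimately have "finite {k. ?M k \<noteq> 0}"
    by (rule finite_subset)
  then show ?thesis unfolding lcm_label_def by simp
qed

lemma exp_dvd_lcm_label_iff: "finite F \<Longrightarrow> exp_dvd (lcm_label e F) b \<longleftrightarrow> (\<forall>v\<in>F. exp_dvd (e v) b)"
  unfolding exp_dvd_def by (auto simp: lookup_lcm_label)

lemma exp_dvd_lcm_label: "finite F \<Longrightarrow> v \<in> F \<Longrightarrow> exp_dvd (e v) (lcm_label e F)"
  unfolding exp_dvd_def by (auto simp: lookup_lcm_label)

lemma exp_dvd_lcm_label_mono: "finite F \<Longrightarrow> G \<subseteq> F \<Longrightarrow> exp_dvd (lcm_label e G) (lcm_label e F)"
  using exp_dvd_lcm_label_iff[of G e "lcm_label e F"] exp_dvd_lcm_label[of F] finite_subset by blast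

lemma lcm_label_empty [simp]: "lcm_label e {} = 0"
  by (intro poly_mapping_eqI) (simp add: lookup_lcm_label)

lemma lcm_label_singleton [simp]: "lcm_label e {v} = e v"
  by (intro poly_mapping_eqI) (simp add: lookup_lcm_label)

lemma keys_lcm_label:
  assumes "finite F"
  shows "Poly_Mapping.keys (lcm_label e F) \<subseteq> (\<Union>v\<in>F. Poly_Mapping.keys (e v))"
proof
  fix k assume k: "k \<in> Poly_Mapping.keys (lcm_label e F)"
  have "Max (insert 0 ((\<lambda>v. Poly_Mapping.lookup (e v) k) ` F)) \<in> insert 0 ((\<lambda>v. Poly_Mapping.lookup (e v) k) ` F)"
    using assms by (intro Max_in) auto
  then show "k \<in> (\<Union>v\<in>F. Poly_Mapping.keys (e v))"
    using k assms by (auto simp: in_keys_iff lookup_lcm_label)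
qed

definition face_sign :: "'v::linorder \<Rightarrow> 'v set \<Rightarrow> 'a::comm_ring_1" where
  "face_sign u F = (-1) ^ card {w\<in>F. w < u}"

lemma face_sign_times_self [simp]: "face_sign u F * face_sign u F = (1::'a::comm_ring_1)"
  unfolding face_sign_def by (simp add: power_mult_distrib[symmetric])

lemma face_sign_insert_self: "face_sign u (insert u F) = face_sign u F"
  unfolding face_sign_def by (rule arg_cong[where f="\<lambda>k. (-1) ^ k"]) (rule arg_cong[where f=card], auto)

lemma face_sign_insert:
  assumes "finite F" "w \<notin> F"
  shows "face_sign u (insert w F) = (if w < u then - face_sign u F else face_sign u F)"
proof -
  have "{x\<in>insert w F. x < u} = (if w < u then insert w {x\<in>F. x < u} else {x\<in>F. x < u})" by auto
  then show ?thesis using assms by (simp add: face_sign_def)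
qed

lemma face_sign_swap:
  assumes "finite G" "u \<notin> G" "w \<notin> G" "u \<noteq> w"
  shows "face_sign w (insert w G) * (face_sign u (insert u (insert w G)) * y) =
    - (face_sign u (insert u G) * (face_sign w (insert w (insert u G)) * y) :: 'a::comm_ring_1)"
proof -
  have "face_sign w (insert w G) * face_sign u (insert u (insert w G)) =
      - (face_sign u (insert u G) * face_sign w (insert w (insert u G)) :: 'a)"
    using assms by (cases "u < w") (auto simp: face_sign_insert face_sign_insert_self)
  then show ?thesis
    by (simp add: mult.assoc[symmetric])
qed

lemma face_sign_cone:
  assumes "finite G" "v \<in> G" "u \<notin> G"
  shows "face_sign u (insert u G) * face_sign v (insert u G) =
    - (face_sign v G * face_sign u (insert u (G - {v})) :: 'a::comm_ring_1)"
proof -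
  define G' where "G' = G - {v}"
  have G': "G = insert v G'" "v \<notin> G'" "finite G'" "u \<notin> G'" "u \<noteq> v"
    using assms by (auto simp: G'_def)
  show ?thesis
    unfolding G'_def[symmetric] G'(1) using G'(2-5)
    by (cases "u < v") (auto simp: face_sign_insert face_sign_insert_self)
qed

lemma sum_sum_antisym:
  fixes f :: "'v \<Rightarrow> 'v \<Rightarrow> 'a::comm_ring_1"
  assumes "finite A" "\<forall>u\<in>A. \<forall>w\<in>A. f w u = - f u w" "\<forall>u\<in>A. f u u = 0"
  shows "(\<Sum>u\<in>A. \<Sum>w\<in>A. f u w) = 0"
  using assms
proof (induction A rule: finite_induct)
  case (insert a A)
  have "(\<Sum>u\<in>insert a A. \<Sum>w\<in>insert a A. f u w) = (f a a + (\<Sum>w\<in>A. f a w)) + (\<Sum>u\<in>A. f u a + (\<Sum>w\<in>A. f u w))"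
    using insert.hyps by simp
  also have "\<dots> = f a a + (\<Sum>w\<in>A. f a w + f w a) + (\<Sum>u\<in>A. \<Sum>w\<in>A. f u w)"
    by (simp only: sum.distrib add.assoc)
  also have "(\<Sum>w\<in>A. f a w + f w a) = 0"
  proof (rule sum.neutral, rule ballI)
    fix w assume "w \<in> A"
    then have "f w a = - f a w"
      using insert.prems(1) by blast
    then show "f a w + f w a = 0" by simp
  qed
  also have "(\<Sum>u\<in>A. \<Sum>w\<in>A. f u w) = 0"
    by (rule insert.IH) (use insert.prems in blast)+
  also have "f a a = 0"
    using insert.prems(2) by blast
  finally show ?case by simp
qed simp

definition cone_contraction :: "'v::linorder \<Rightarrow> ('v set \<Rightarrow> 'a::comm_ring_1) \<Rightarrow> 'v set \<Rightarrow> 'a" where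
  "cone_contraction v x G = (if v \<in> G then face_sign v G * x (G - {v}) else 0)"

section \<open>Labelled complexes whose lower subcomplexes are cones\<close>

locale cone_labelled_complex =
  fixes V :: "'v::linorder set" and D :: "'v set set" and e :: "'v \<Rightarrow> (nat \<Rightarrow>\<^sub>0 nat)" and n :: nat
  assumes finite_vertices: "finite V"
    and face_subset_vertices: "F \<in> D \<Longrightarrow> F \<subseteq> V"
    and face_subset_closed: "F \<in> D \<Longrightarrow> G \<subseteq> F \<Longrightarrow> G \<in> D"
    and empty_face: "{} \<in> D"
    and vertex_face: "v \<in> V \<Longrightarrow> {v} \<in> D"
    and keys_label: "v \<in> V \<Longrightarrow> Poly_Mapping.keys (e v) \<subseteq> {..<n}"
    and cone_below: "F \<in> D \<Longrightarrow> F \<noteq> {} \<Longrightarrow> exp_dvd (lcm_label e F) b \<Longrightarrow>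
      \<exists>v\<in>V. \<forall>G\<in>D. exp_dvd (lcm_label e G) b \<longrightarrow>
        insert v G \<in> D \<and> exp_dvd (lcm_label e (insert v G)) b"
begin

lemma finite_face: "F \<in> D \<Longrightarrow> finite F"
  using face_subset_vertices finite_vertices finite_subset by blast

lemma keys_lcm_label_face: "F \<in> D \<Longrightarrow> Poly_Mapping.keys (lcm_label e F) \<subseteq> {..<n}"
  using keys_lcm_label[OF finite_face, of F e] face_subset_vertices keys_label by blast

text \<open>A chain assigns a coefficient to every face; \<open>chain_bdry z G\<close> is the coefficient of \<open>G\<close>
  in the boundary of \<open>z\<close>, collected from the faces \<open>G \<union> {u}\<close>.\<close>
definition chain_bdry :: "('v set \<Rightarrow> 'a::comm_ring_1 mpoly) \<Rightarrow> 'v set \<Rightarrow> 'a mpoly" where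
  "chain_bdry z G = (\<Sum>u\<in>V - G. if insert u G \<in> D
     then Poly_Mapping.single (lcm_label e (insert u G) - lcm_label e G) (face_sign u (insert u G)) * z (insert u G)
     else 0)"

definition scalar_bdry :: "('v set \<Rightarrow> 'a::comm_ring_1) \<Rightarrow> 'v set \<Rightarrow> 'a" where
  "scalar_bdry x G = (\<Sum>u\<in>V - G. if insert u G \<in> D then face_sign u (insert u G) * x (insert u G) else 0)"

definition chains :: "nat \<Rightarrow> ('v set \<Rightarrow> 'a::comm_ring_1 mpoly) set" where
  "chains k = {z. (\<forall>F. z F \<noteq> 0 \<longrightarrow> F \<in> D \<and> card F = k) \<and> (\<forall>F. z F \<in> polyring n)}"

text \<open>The face \<open>F\<close> spans a free summand generated in multidegree \<open>lcm_label e F\<close>. In each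
  multidegree \<open>b\<close> the chain complex therefore restricts to the scalar chain complex of the
  subcomplex of faces whose label divides \<open>x\<^sup>b\<close>.\<close>
definition graded_coeff :: "('v set \<Rightarrow> 'a::comm_ring_1 mpoly) \<Rightarrow> 'v set \<Rightarrow> (nat \<Rightarrow>\<^sub>0 nat) \<Rightarrow> 'a" where
  "graded_coeff z F b =
    (if exp_dvd (lcm_label e F) b then Poly_Mapping.lookup (z F) (b - lcm_label e F) else 0)"

lemma graded_coeff_chain_bdry: "graded_coeff (chain_bdry z) G b = scalar_bdry (\<lambda>F. graded_coeff z F b) G"
proof (cases "G \<in> D \<and> exp_dvd (lcm_label e G) b")
  case True
  have "graded_coeff (chain_bdry z) G b = (\<Sum>u\<in>V - G. if insert u G \<in> D then
      Poly_Mapping.lookup (Poly_Mapping.single (lcm_label e (insert u G) - lcm_label e G) (face_sign u (insert u G))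
        * z (insert u G)) (b - lcm_label e G) else 0)"
    using True by (simp add: graded_coeff_def chain_bdry_def lookup_sum if_distrib[of "\<lambda>p. Poly_Mapping.lookup p _"] cong: if_cong)
  also have "\<dots> = scalar_bdry (\<lambda>F. graded_coeff z F b) G"
    unfolding scalar_bdry_def
  proof (rule sum.cong[OF refl])
    fix u
    have "exp_dvd (lcm_label e G) (lcm_label e (insert u G))"
      using True finite_face by (intro exp_dvd_lcm_label_mono) auto
    then show "(if insert u G \<in> D then Poly_Mapping.lookup (Poly_Mapping.single (lcm_label e (insert u G) - lcm_label e G)
        (face_sign u (insert u G)) * z (insert u G)) (b - lcm_label e G) else 0)
      = (if insert u G \<in> D then face_sign u (insert u G) * graded_coeff z (insert u G) b else 0)"
      using True by (simp add: lookup_single_times graded_coeff_def exp_dvd_diff_iff diff_diff_exp)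
  qed
  finally show ?thesis .
next
  case False
  then have "insert u G \<notin> D \<or> \<not> exp_dvd (lcm_label e (insert u G)) b" for u
    using face_subset_closed exp_dvd_lcm_label_mono[OF finite_face, of "insert u G" G e] exp_dvd_trans by blast
  then have "scalar_bdry (\<lambda>F. graded_coeff z F b) G = 0"
    unfolding scalar_bdry_def graded_coeff_def by (intro sum.neutral) auto
  moreover have "graded_coeff (chain_bdry z) G b = 0"
  proof (cases "G \<in> D")
    case False
    then have "insert u G \<notin> D" for u
      using face_subset_closed by blast
    then show ?thesis by (simp add: graded_coeff_def chain_bdry_def)
  qed (use False in \<open>simp add: graded_coeff_def\<close>)
  ultimately show ?thesis by simp
qed

lemma chain_eqI: "(\<And>G b. graded_coeff z G b = graded_coeff w G b) \<Longrightarrow> z = w"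
proof (rule ext, rule poly_mapping_eqI)
  fix G c
  assume "\<And>G b. graded_coeff z G b = graded_coeff w G b"
  from this[of G "c + lcm_label e G"]
  show "Poly_Mapping.lookup (z G) c = Poly_Mapping.lookup (w G) c"
    by (simp add: graded_coeff_def exp_dvd_def lookup_add)
qed

lemma chain_nonzero_graded_coeff:
  assumes "z F \<noteq> 0"
  obtains b where "graded_coeff z F b \<noteq> 0"
proof -
  obtain c where "Poly_Mapping.lookup (z F) c \<noteq> 0"
    using assms by (metis lookup_zero poly_mapping_eqI)
  then have "graded_coeff z F (c + lcm_label e F) \<noteq> 0"
    by (simp add: graded_coeff_def exp_dvd_def lookup_add)
  then show ?thesis by (rule that)
qed

lemma finite_graded_support: "finite {b. graded_coeff z F b \<noteq> 0}"
proof -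
  have "{b. graded_coeff z F b \<noteq> 0} \<subseteq> (\<lambda>c. c + lcm_label e F) ` Poly_Mapping.keys (z F)"
    by (auto simp: graded_coeff_def in_keys_iff diff_add_exp split: if_splits
        intro!: image_eqI[where x="_ - lcm_label e F"])
  then show ?thesis by (rule finite_subset) simp
qed

lemma keys_graded_support:
  assumes "F \<in> D" "z F \<in> polyring n" "graded_coeff z F b \<noteq> 0"
  shows "Poly_Mapping.keys b \<subseteq> {..<n}"
proof -
  have b: "b = (b - lcm_label e F) + lcm_label e F" "b - lcm_label e F \<in> Poly_Mapping.keys (z F)"
    using assms(3) by (auto simp: graded_coeff_def in_keys_iff diff_add_exp split: if_splits)
  show ?thesis
    using assms(2) b(2) keys_lcm_label_face[OF assms(1)]
    by (subst b(1)) (auto simp: polyring_def keys_add_exp)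
qed

lemma scalar_bdry_scalar_bdry: "scalar_bdry (scalar_bdry x) G = 0"
proof -
  define f where "f u w = (if u \<noteq> w \<and> insert w (insert u G) \<in> D
    then face_sign u (insert u G) * (face_sign w (insert w (insert u G)) * x (insert w (insert u G)))
    else 0)" for u w
  have expand: "(if insert u G \<in> D then face_sign u (insert u G) * scalar_bdry x (insert u G) else 0) =
      (\<Sum>w\<in>V - G. f u w)" if u: "u \<in> V - G" for u
  proof (cases "insert u G \<in> D")
    case True
    have VG: "V - G = insert u (V - insert u G)" using u by auto
    have "(\<Sum>w\<in>V - G. f u w) = (\<Sum>w\<in>V - insert u G. f u w)"
      unfolding VG using finite_vertices by (subst sum.insert) (auto simp: f_def)
    also have "\<dots> = face_sign u (insert u G) * scalar_bdry x (insert u G)"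
      unfolding scalar_bdry_def sum_distrib_left by (rule sum.cong) (auto simp: f_def)
    finally show ?thesis using True by simp
  next
    case False
    then have "insert w (insert u G) \<notin> D" for w using face_subset_closed by blast
    then show ?thesis using False by (simp add: f_def)
  qed
  have "scalar_bdry (scalar_bdry x) G = (\<Sum>u\<in>V - G. \<Sum>w\<in>V - G. f u w)"
    unfolding scalar_bdry_def[of "scalar_bdry x"] using expand by (intro sum.cong) auto
  also have "\<dots> = 0"
  proof (rule sum_sum_antisym)
    show "finite (V - G)" using finite_vertices by simp
    show "\<forall>u\<in>V - G. f u u = 0" by (simp add: f_def)
    show "\<forall>u\<in>V - G. \<forall>w\<in>V - G. f w u = - f u w"
    proof (intro ballI)
      fix u w assume "u \<in> V - G" "w \<in> V - G"
      have swap: "insert u (insert w G) = insert w (insert u G)" by auto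
      show "f w u = - f u w"
      proof (cases "u \<noteq> w \<and> insert w (insert u G) \<in> D")
        case True
        then have "finite G" "w \<noteq> u" using finite_face[of "insert w (insert u G)"] by auto
        then have "face_sign w (insert w G) * (face_sign u (insert u (insert w G)) * x (insert w (insert u G))) =
            - (face_sign u (insert u G) * (face_sign w (insert w (insert u G)) * x (insert w (insert u G))))"
          using \<open>u \<in> V - G\<close> \<open>w \<in> V - G\<close> by (intro face_sign_swap) auto
        then show ?thesis
          using True \<open>w \<noteq> u\<close> unfolding f_def swap by simp
      next
        case False
        then show ?thesis unfolding f_def swap by auto
      qed
    qed
  qed
  finally show ?thesis .
qed

lemma chain_bdry_chain_bdry: "chain_bdry (chain_bdry z) = (\<lambda>_. 0)"
proof (rule chain_eqI)
  fix G b
  have "graded_coeff (chain_bdry (chain_bdry z)) G b = scalar_bdry (scalar_bdry (\<lambda>F. graded_coeff z F b)) G"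
    by (simp add: graded_coeff_chain_bdry)
  then show "graded_coeff (chain_bdry (chain_bdry z)) G b = graded_coeff (\<lambda>_. 0) G b"
    by (simp add: scalar_bdry_scalar_bdry graded_coeff_def)
qed

lemma chain_bdry_in_chains:
  assumes "z \<in> chains (Suc k)"
  shows "chain_bdry z \<in> chains k"
  unfolding chains_def
proof (rule CollectI, rule conjI; intro allI impI)
  fix G assume nonzero: "chain_bdry z G \<noteq> 0"
  have "\<exists>u. u \<in> V - G \<and> insert u G \<in> D \<and> z (insert u G) \<noteq> 0"
  proof (rule ccontr)
    assume "\<nexists>u. u \<in> V - G \<and> insert u G \<in> D \<and> z (insert u G) \<noteq> 0"
    then have "chain_bdry z G = 0" unfolding chain_bdry_def by (intro sum.neutral) auto
    with nonzero show False by simp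
  qed
  then obtain u where u: "u \<in> V - G" "insert u G \<in> D" "z (insert u G) \<noteq> 0" by blast
  then have "card (insert u G) = Suc k" "finite G"
    using assms finite_face[OF u(2)] by (auto simp: chains_def)
  then show "G \<in> D \<and> card G = k"
    using u face_subset_closed[OF u(2), of G] by auto
next
  fix G
  show "chain_bdry z G \<in> polyring n"
    unfolding chain_bdry_def
  proof (intro polyring_sum)
    fix u
    have "Poly_Mapping.keys (lcm_label e (insert u G) - lcm_label e G) \<subseteq> {..<n}" if "insert u G \<in> D"
      using keys_lcm_label_face[OF that] keys_diff_exp by blast
    then show "(if insert u G \<in> D then Poly_Mapping.single (lcm_label e (insert u G) - lcm_label e G)
        (face_sign u (insert u G)) * z (insert u G) else 0) \<in> polyring n"
      using assms by (auto simp: chains_def intro: polyring_mult polyring_single)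
  qed
qed

lemma cone_homotopy_off_apex:
  assumes "v \<in> V" "v \<notin> G"
    and cone: "\<And>F. F \<in> D \<Longrightarrow> P F \<Longrightarrow> insert v F \<in> D"
    and supp: "\<And>F. x F \<noteq> 0 \<Longrightarrow> F \<in> D \<and> P F"
  shows "scalar_bdry (cone_contraction v x) G = x G"
proof -
  have "scalar_bdry (cone_contraction v x) G = (\<Sum>u\<in>V - G. if u = v \<and> insert v G \<in> D then x G else 0)"
    unfolding scalar_bdry_def
  proof (rule sum.cong[OF refl])
    fix u assume "u \<in> V - G"
    have "insert v G - {v} = G" using assms(2) by auto
    then show "(if insert u G \<in> D then face_sign u (insert u G) * cone_contraction v x (insert u G) else 0) =
        (if u = v \<and> insert v G \<in> D then x G else 0)"
      using \<open>u \<in> V - G\<close> assms(2)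
      by (auto simp: cone_contraction_def mult.assoc[symmetric])
  qed
  also have "\<dots> = (if insert v G \<in> D then x G else 0)"
    using assms(1,2) finite_vertices by (simp add: sum.delta')
  also have "\<dots> = x G"
    using supp cone by auto
  finally show ?thesis .
qed

lemma cone_homotopy_at_apex:
  assumes "v \<in> V" "v \<in> G"
    and cone: "\<And>F. F \<in> D \<Longrightarrow> P F \<Longrightarrow> insert v F \<in> D"
    and supp: "\<And>F. x F \<noteq> 0 \<Longrightarrow> F \<in> D \<and> P F"
  shows "scalar_bdry (cone_contraction v x) G + cone_contraction v (scalar_bdry x) G = x G"
proof -
  define G' where "G' = G - {v}"
  have G: "G = insert v G'" "v \<notin> G'" and VG': "V - G' = insert v (V - G)"
    using assms(1,2) by (auto simp: G'_def)
  have "cone_contraction v (scalar_bdry x) G = face_sign v G * scalar_bdry x G'"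
    using assms(2) by (simp add: cone_contraction_def G'_def)
  also have "\<dots> = face_sign v G * ((if G \<in> D then face_sign v G * x G else 0) +
      (\<Sum>u\<in>V - G. if insert u G' \<in> D then face_sign u (insert u G') * x (insert u G') else 0))"
    unfolding scalar_bdry_def VG' using finite_vertices G by (subst sum.insert) auto
  also have "\<dots> = x G +
      (\<Sum>u\<in>V - G. face_sign v G * (if insert u G' \<in> D then face_sign u (insert u G') * x (insert u G') else 0))"
    using supp[of G] by (cases "G \<in> D") (auto simp: distrib_left sum_distrib_left mult.assoc[symmetric])
  moreover have "scalar_bdry (cone_contraction v x) G = (\<Sum>u\<in>V - G.
      if insert u G \<in> D then face_sign u (insert u G) * (face_sign v (insert u G) * x (insert u G')) else 0)"
    unfolding scalar_bdry_def using G by (intro sum.cong refl) (auto simp: cone_contraction_def insert_Diff_if)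
  moreover have "(if insert u G \<in> D then face_sign u (insert u G) * (face_sign v (insert u G) * x (insert u G')) else 0)
      + face_sign v G * (if insert u G' \<in> D then face_sign u (insert u G') * x (insert u G') else 0) = 0"
    if u: "u \<in> V - G" for u
  proof (cases "x (insert u G') = 0")
    case False
    then have faces: "insert u G' \<in> D" "insert u G \<in> D"
      using supp cone[of "insert u G'"] G(1) by (auto simp: insert_commute)
    have "face_sign u (insert u G) * face_sign v (insert u G) = - (face_sign v G * face_sign u (insert u G') :: 'a)"
      unfolding G'_def using u assms(2) finite_face[OF faces(2)] by (intro face_sign_cone) auto
    then show ?thesis
      using faces by (simp add: algebra_simps)
  qed simp
  ultimately show ?thesis
    by (simp add: sum.distrib[symmetric])
qed

lemma cone_homotopy:
  assumes "v \<in> V"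
    and cone: "\<And>F. F \<in> D \<Longrightarrow> P F \<Longrightarrow> insert v F \<in> D"
    and supp: "\<And>F. x F \<noteq> 0 \<Longrightarrow> F \<in> D \<and> P F"
  shows "scalar_bdry (cone_contraction v x) G + cone_contraction v (scalar_bdry x) G = x G"
  using cone_homotopy_off_apex[OF assms(1) _ cone supp] cone_homotopy_at_apex[OF assms(1) _ cone supp]
  by (cases "v \<in> G") (auto simp: cone_contraction_def)

lemma graded_coeff_nonzeroD: "graded_coeff z F b \<noteq> 0 \<Longrightarrow> z F \<noteq> 0 \<and> exp_dvd (lcm_label e F) b"
  by (auto simp: graded_coeff_def split: if_splits)

lemma polyring_if_graded_keys:
  assumes "\<And>b. graded_coeff z F b \<noteq> 0 \<Longrightarrow> Poly_Mapping.keys b \<subseteq> {..<n}"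
  shows "z F \<in> polyring n"
  unfolding polyring_def
proof (intro CollectI ballI)
  fix c assume "c \<in> Poly_Mapping.keys (z F)"
  then have "graded_coeff z F (c + lcm_label e F) \<noteq> 0"
    by (simp add: graded_coeff_def exp_dvd_def lookup_add in_keys_iff)
  then show "Poly_Mapping.keys c \<subseteq> {..<n}"
    using assms keys_add_exp by blast
qed

lemma chain_from_graded_coeffs:
  assumes "\<And>b G. y b G \<noteq> 0 \<Longrightarrow> exp_dvd (lcm_label e G) b" "\<And>G. finite {b. y b G \<noteq> 0}"
  obtains w where "\<And>G b. graded_coeff w G b = y b G"
proof
  define w where "w G = Abs_poly_mapping (\<lambda>c. y (c + lcm_label e G) G)" for G
  have "{c. y (c + lcm_label e G) G \<noteq> 0} \<subseteq> (\<lambda>b. b - lcm_label e G) ` {b. y b G \<noteq> 0}" for G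
    by (auto intro!: image_eqI[where x="_ + lcm_label e G"])
  then have "finite {c. y (c + lcm_label e G) G \<noteq> 0}" for G
    by (rule finite_surj[OF assms(2)])
  then have lookup_w: "Poly_Mapping.lookup (w G) c = y (c + lcm_label e G) G" for G c
    by (simp add: w_def)
  show "graded_coeff w G b = y b G" for G b
    using assms(1)[of b G] by (auto simp: graded_coeff_def lookup_w diff_add_exp)
qed

lemma scalar_cycle_is_boundary:
  assumes supp: "\<And>F. x F \<noteq> 0 \<Longrightarrow> F \<in> D \<and> card F = Suc k \<and> exp_dvd (lcm_label e F) b"
    and cycle: "\<And>G. scalar_bdry x G = 0"
  obtains y where "\<And>G. scalar_bdry y G = x G"
    and "\<And>G. y G \<noteq> 0 \<Longrightarrow>
      G \<in> D \<and> card G = Suc (Suc k) \<and> exp_dvd (lcm_label e G) b \<and> (\<exists>v\<in>G. x (G - {v}) \<noteq> 0)"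
proof (cases "\<exists>F. x F \<noteq> 0")
  case True
  then obtain F where F: "F \<in> D" "F \<noteq> {}" "exp_dvd (lcm_label e F) b"
    using supp by fastforce
  obtain v where v: "v \<in> V"
    and cone: "\<And>G. G \<in> D \<Longrightarrow> exp_dvd (lcm_label e G) b \<Longrightarrow>
      insert v G \<in> D \<and> exp_dvd (lcm_label e (insert v G)) b"
    using cone_below[OF F] by blast
  show ?thesis
  proof (rule that[of "cone_contraction v x"])
    fix G
    have "cone_contraction v (scalar_bdry x) G = 0"
      by (simp add: cycle cone_contraction_def)
    then show "scalar_bdry (cone_contraction v x) G = x G"
      using cone_homotopy[OF v, of "\<lambda>G. exp_dvd (lcm_label e G) b" x G] cone supp by simp
  next
    fix G assume "cone_contraction v x G \<noteq> 0"
    then have G: "v \<in> G" "x (G - {v}) \<noteq> 0"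
      by (auto simp: cone_contraction_def split: if_splits)
    then have "G - {v} \<in> D" "card (G - {v}) = Suc k" "exp_dvd (lcm_label e (G - {v})) b"
      using supp by auto
    moreover have "insert v (G - {v}) = G"
      using G(1) by auto
    ultimately show "G \<in> D \<and> card G = Suc (Suc k) \<and> exp_dvd (lcm_label e G) b \<and> (\<exists>v\<in>G. x (G - {v}) \<noteq> 0)"
      using cone[of "G - {v}"] G finite_face by (metis card_Suc_Diff1 finite_Diff2 finite_insert)
  qed
next
  case False
  have "scalar_bdry (\<lambda>_. 0) G = 0" for G
    unfolding scalar_bdry_def by (intro sum.neutral) simp
  with False show ?thesis
    by (intro that[of "\<lambda>_. 0"]) auto
qed

lemma graded_cycle_is_boundary:
  assumes z: "z \<in> chains (Suc k)" and cycle: "chain_bdry z = (\<lambda>_. 0)"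
  obtains y where "\<And>b G. scalar_bdry (y b) G = graded_coeff z G b"
    and "\<And>b G. y b G \<noteq> 0 \<Longrightarrow> G \<in> D \<and> card G = Suc (Suc k) \<and> exp_dvd (lcm_label e G) b \<and>
      (\<exists>v\<in>G. graded_coeff z (G - {v}) b \<noteq> 0)"
proof -
  have "\<exists>y. (\<forall>G. scalar_bdry y G = graded_coeff z G b) \<and> (\<forall>G. y G \<noteq> 0 \<longrightarrow>
      G \<in> D \<and> card G = Suc (Suc k) \<and> exp_dvd (lcm_label e G) b \<and> (\<exists>v\<in>G. graded_coeff z (G - {v}) b \<noteq> 0))"
    for b
  proof (rule scalar_cycle_is_boundary)
    show "F \<in> D \<and> card F = Suc k \<and> exp_dvd (lcm_label e F) b" if "graded_coeff z F b \<noteq> 0" for F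
      using that z graded_coeff_nonzeroD[of z F b] by (auto simp: chains_def)
    show "scalar_bdry (\<lambda>F. graded_coeff z F b) G = 0" for G
    proof -
      have "scalar_bdry (\<lambda>F. graded_coeff z F b) G = graded_coeff (chain_bdry z) G b"
        by (simp add: graded_coeff_chain_bdry)
      also have "\<dots> = 0"
        using cycle by (simp add: graded_coeff_def)
      finally show ?thesis .
    qed
  qed blast+
  then show ?thesis
    using that by metis
qed

lemma cycle_is_boundary:
  assumes z: "z \<in> chains (Suc k)" and cycle: "chain_bdry z = (\<lambda>_. 0)"
  obtains w where "w \<in> chains (Suc (Suc k))" "chain_bdry w = z"
proof -
  obtain y where y_bdry: "\<And>b G. scalar_bdry (y b) G = graded_coeff z G b"
    and y_supp: "\<And>b G. y b G \<noteq> 0 \<Longrightarrow> G \<in> D \<and> card G = Suc (Suc k) \<and> exp_dvd (lcm_label e G) b \<and>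
      (\<exists>v\<in>G. graded_coeff z (G - {v}) b \<noteq> 0)"
    using graded_cycle_is_boundary[OF assms] by blast
  have "finite {b. y b G \<noteq> 0}" for G
  proof (cases "G \<in> D")
    case True
    have "{b. y b G \<noteq> 0} \<subseteq> (\<Union>v\<in>G. {b. graded_coeff z (G - {v}) b \<noteq> 0})"
      using y_supp by force
    moreover have "finite (\<Union>v\<in>G. {b. graded_coeff z (G - {v}) b \<noteq> 0})"
      using finite_face[OF True] finite_graded_support by blast
    ultimately show ?thesis
      by (rule finite_subset)
  next
    case False
    then have "{b. y b G \<noteq> 0} = {}"
      using y_supp by blast
    then show ?thesis by simp
  qed
  then obtain w where w: "\<And>G b. graded_coeff w G b = y b G"
    using chain_from_graded_coeffs y_supp by metis
  show ?thesis
  proof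
    show "chain_bdry w = z"
      by (rule chain_eqI) (simp add: graded_coeff_chain_bdry w y_bdry)
    have "w G \<in> polyring n" for G
    proof (rule polyring_if_graded_keys)
      fix b assume "graded_coeff w G b \<noteq> 0"
      then obtain v where "graded_coeff z (G - {v}) b \<noteq> 0"
        using w y_supp by metis
      moreover from this have "G - {v} \<in> D"
        using z graded_coeff_nonzeroD by (auto simp: chains_def)
      ultimately show "Poly_Mapping.keys b \<subseteq> {..<n}"
        using z keys_graded_support[of "G - {v}" z b] by (simp add: chains_def)
    qed
    moreover have "G \<in> D \<and> card G = Suc (Suc k)" if "w G \<noteq> 0" for G
      using chain_nonzero_graded_coeff[of w G, OF that] w y_supp by metis
    ultimately show "w \<in> chains (Suc (Suc k))"
      by (simp add: chains_def)
  qed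
qed

lemma chain_exact: "{z \<in> chains (Suc k). chain_bdry z = (\<lambda>_. 0)} = chain_bdry ` chains (Suc (Suc k))"
proof
  show "{z \<in> chains (Suc k). chain_bdry z = (\<lambda>_. 0)} \<subseteq> chain_bdry ` chains (Suc (Suc k))"
  proof
    fix z assume "z \<in> {z \<in> chains (Suc k). chain_bdry z = (\<lambda>_. 0)}"
    then obtain w where "w \<in> chains (Suc (Suc k))" "chain_bdry w = z"
      by (auto elim: cycle_is_boundary)
    then show "z \<in> chain_bdry ` chains (Suc (Suc k))" by blast
  qed
  show "chain_bdry ` chains (Suc (Suc k)) \<subseteq> {z \<in> chains (Suc k). chain_bdry z = (\<lambda>_. 0)}"
    using chain_bdry_in_chains chain_bdry_chain_bdry by blast
qed

lemma chains_above_dim: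
  assumes "\<forall>F\<in>D. card F \<le> len"
  shows "chains (Suc len) = {\<lambda>_. 0}"
proof -
  have "z = (\<lambda>_. 0)" if "z \<in> chains (Suc len)" for z
  proof
    fix F show "z F = 0"
      using that assms by (metis (mono_tags, lifting) chains_def mem_Collect_eq not_less_eq_eq order.refl)
  qed
  then show ?thesis by (auto simp: chains_def)
qed

lemma cycles_top_dim:
  assumes "\<forall>F\<in>D. card F \<le> Suc len"
  shows "{z \<in> chains (Suc len). chain_bdry z = (\<lambda>_. 0)} = {\<lambda>_. 0 :: 'a::comm_ring_1 mpoly}"
proof -
  have "chains (Suc (Suc len)) = {\<lambda>_. 0 :: 'a mpoly}"
    using assms by (intro chains_above_dim) simp
  moreover have "chain_bdry (\<lambda>_. 0) = (\<lambda>_. (0::'a mpoly))"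
    by (simp add: chain_bdry_def fun_eq_iff cong: if_cong)
  ultimately show ?thesis
    by (simp add: chain_exact)
qed

section \<open>The labelled chain complex as a free resolution\<close>

definition faces_of_card :: "nat \<Rightarrow> 'v set set" where
  "faces_of_card k = {F \<in> D. card F = k}"

definition rank :: "nat \<Rightarrow> nat" where
  "rank i = card (faces_of_card (Suc i))"

text \<open>Homological degree \<open>i\<close> has one basis vector per face of cardinality \<open>i + 1\<close>.\<close>
definition face_enum :: "nat \<Rightarrow> nat \<Rightarrow> 'v set" where
  "face_enum i = (SOME f. bij_betw f {0..<rank i} (faces_of_card (Suc i)))"

definition bdry_coeff :: "'v set \<Rightarrow> 'v set \<Rightarrow> 'a::comm_ring_1 mpoly" where
  "bdry_coeff G F = (\<Sum>u\<in>V - G. if F = insert u G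
     then Poly_Mapping.single (lcm_label e F - lcm_label e G) (face_sign u F) else 0)"

definition bdry_matrix :: "nat \<Rightarrow> nat \<Rightarrow> nat \<Rightarrow> 'a::comm_ring_1 mpoly" where
  "bdry_matrix i j k = bdry_coeff (face_enum (i - 1) j) (face_enum i k)"

definition augmentation :: "nat \<Rightarrow> 'a::comm_ring_1 mpoly" where
  "augmentation k = bdry_coeff {} (face_enum 0 k)"

definition vec_to_chain :: "nat \<Rightarrow> (nat \<Rightarrow> 'a::comm_ring_1 mpoly) \<Rightarrow> 'v set \<Rightarrow> 'a mpoly" where
  "vec_to_chain i v F =
    (if F \<in> faces_of_card (Suc i) then v (inv_into {0..<rank i} (face_enum i) F) else 0)"

definition chain_to_vec :: "nat \<Rightarrow> ('v set \<Rightarrow> 'a::comm_ring_1 mpoly) \<Rightarrow> nat \<Rightarrow> 'a mpoly" where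
  "chain_to_vec i z k = (if k < rank i then z (face_enum i k) else 0)"

lemma finite_faces_of_card: "finite (faces_of_card k)"
proof -
  have "faces_of_card k \<subseteq> Pow V"
    using face_subset_vertices by (auto simp: faces_of_card_def)
  then show ?thesis
    using finite_vertices finite_subset by blast
qed

lemma bij_face_enum: "bij_betw (face_enum i) {0..<rank i} (faces_of_card (Suc i))"
proof -
  have "\<exists>f. bij_betw f {0..<rank i} (faces_of_card (Suc i))"
    unfolding rank_def by (rule ex_bij_betw_nat_finite[OF finite_faces_of_card])
  then show ?thesis
    unfolding face_enum_def by (rule someI_ex)
qed

lemma face_enum_in: "k < rank i \<Longrightarrow> face_enum i k \<in> faces_of_card (Suc i)"
  using bij_face_enum[of i] by (auto simp: bij_betw_def)

lemma inv_face_enum: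
  assumes "F \<in> faces_of_card (Suc i)"
  shows "inv_into {0..<rank i} (face_enum i) F < rank i"
    and "face_enum i (inv_into {0..<rank i} (face_enum i) F) = F"
  using assms bij_face_enum[of i] by (metis atLeastLessThan_iff bij_betw_def inv_into_into,
      metis bij_betw_def f_inv_into_f)

lemma inv_face_enum_face_enum: "k < rank i \<Longrightarrow> inv_into {0..<rank i} (face_enum i) (face_enum i k) = k"
  using bij_face_enum[of i] by (metis atLeastLessThan_iff bij_betw_def inv_into_f_f zero_le)

lemma vec_to_chain_in_chains: "v \<in> vecs n (rank i) \<Longrightarrow> vec_to_chain i v \<in> chains (Suc i)"
  by (auto simp: chains_def vec_to_chain_def faces_of_card_def vecs_def inv_face_enum)

lemma chain_to_vec_in_vecs: "z \<in> chains (Suc i) \<Longrightarrow> chain_to_vec i z \<in> vecs n (rank i)"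
  by (simp add: chains_def chain_to_vec_def vecs_def)

lemma chain_to_vec_vec_to_chain: "v \<in> vecs n (rank i) \<Longrightarrow> chain_to_vec i (vec_to_chain i v) = v"
  by (auto simp: chain_to_vec_def vec_to_chain_def vecs_def face_enum_in inv_face_enum_face_enum)

lemma vec_to_chain_chain_to_vec:
  assumes "z \<in> chains (Suc i)"
  shows "vec_to_chain i (chain_to_vec i z) = z"
proof
  fix F
  show "vec_to_chain i (chain_to_vec i z) F = z F"
    using assms inv_face_enum[of F i]
    by (cases "F \<in> faces_of_card (Suc i)") (auto simp: chain_to_vec_def vec_to_chain_def chains_def faces_of_card_def)
qed

lemma bij_vec_to_chain: "bij_betw (vec_to_chain i) (vecs n (rank i)) (chains (Suc i))"
  by (rule bij_betw_byWitness[where f'="chain_to_vec i"])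
    (auto simp: chain_to_vec_vec_to_chain vec_to_chain_chain_to_vec vec_to_chain_in_chains chain_to_vec_in_vecs)

lemma sum_bdry_coeff:
  assumes "G \<in> D"
  shows "(\<Sum>F\<in>faces_of_card (Suc (card G)). bdry_coeff G F * z F) = chain_bdry z G"
proof -
  let ?term = "\<lambda>u. Poly_Mapping.single (lcm_label e (insert u G) - lcm_label e G) (face_sign u (insert u G)) * z (insert u G)"
  have "(\<Sum>F\<in>faces_of_card (Suc (card G)). bdry_coeff G F * z F) =
      (\<Sum>F\<in>faces_of_card (Suc (card G)). \<Sum>u\<in>V - G. if F = insert u G then ?term u else 0)"
    unfolding bdry_coeff_def sum_distrib_right by (intro sum.cong refl) auto
  also have "\<dots> = (\<Sum>u\<in>V - G. \<Sum>F\<in>faces_of_card (Suc (card G)). if F = insert u G then ?term u else 0)"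
    by (rule sum.swap)
  also have "\<dots> = chain_bdry z G"
    unfolding chain_bdry_def
  proof (intro sum.cong refl)
    fix u assume "u \<in> V - G"
    then have "insert u G \<in> faces_of_card (Suc (card G)) \<longleftrightarrow> insert u G \<in> D"
      using finite_face[OF assms] by (simp add: faces_of_card_def)
    with finite_faces_of_card show "(\<Sum>F\<in>faces_of_card (Suc (card G)). if F = insert u G then ?term u else 0) =
        (if insert u G \<in> D then ?term u else 0)"
      by (simp add: sum.delta')
  qed
  finally show ?thesis .
qed

lemma mapply_bdry_matrix:
  "mapply (bdry_matrix (Suc i)) (rank i) (rank (Suc i)) v = chain_to_vec i (chain_bdry (vec_to_chain (Suc i) v))"
proof
  fix j
  show "mapply (bdry_matrix (Suc i)) (rank i) (rank (Suc i)) v j = chain_to_vec i (chain_bdry (vec_to_chain (Suc i) v)) j"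
  proof (cases "j < rank i")
    case True
    have G: "face_enum i j \<in> D" "card (face_enum i j) = Suc i"
      using face_enum_in[OF True] by (auto simp: faces_of_card_def)
    have "(\<Sum>k<rank (Suc i). bdry_matrix (Suc i) j k * v k) =
        (\<Sum>k\<in>{0..<rank (Suc i)}. bdry_coeff (face_enum i j) (face_enum (Suc i) k) * vec_to_chain (Suc i) v (face_enum (Suc i) k))"
      unfolding bdry_matrix_def lessThan_atLeast0
      by (intro sum.cong refl) (simp add: vec_to_chain_def face_enum_in inv_face_enum_face_enum)
    also have "\<dots> = (\<Sum>F\<in>faces_of_card (Suc (Suc i)). bdry_coeff (face_enum i j) F * vec_to_chain (Suc i) v F)"
      by (rule sum.reindex_bij_betw[OF bij_face_enum])
    also have "\<dots> = chain_bdry (vec_to_chain (Suc i) v) (face_enum i j)"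
      using sum_bdry_coeff[OF G(1)] G(2) by simp
    finally show ?thesis
      using True by (simp add: mapply_def chain_to_vec_def)
  qed (simp add: mapply_def chain_to_vec_def)
qed

lemma augmentation_apply: "(\<Sum>k<rank 0. augmentation k * v k) = chain_bdry (vec_to_chain 0 v) {}"
proof -
  have "(\<Sum>k<rank 0. augmentation k * v k) =
      (\<Sum>k\<in>{0..<rank 0}. bdry_coeff {} (face_enum 0 k) * vec_to_chain 0 v (face_enum 0 k))"
    unfolding augmentation_def lessThan_atLeast0
    by (intro sum.cong refl) (simp add: vec_to_chain_def face_enum_in inv_face_enum_face_enum)
  also have "\<dots> = (\<Sum>F\<in>faces_of_card (Suc 0). bdry_coeff {} F * vec_to_chain 0 v F)"
    by (rule sum.reindex_bij_betw[OF bij_face_enum])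
  also have "\<dots> = chain_bdry (vec_to_chain 0 v) {}"
    using sum_bdry_coeff[OF empty_face] by simp
  finally show ?thesis .
qed

lemma bdry_coeff_polyring:
  assumes "F \<in> D"
  shows "bdry_coeff G F \<in> polyring n"
proof -
  have "Poly_Mapping.keys (lcm_label e F - lcm_label e G) \<subseteq> {..<n}"
    using keys_lcm_label_face[OF assms] keys_diff_exp by blast
  then show ?thesis
    unfolding bdry_coeff_def by (intro polyring_sum) (auto intro: polyring_single)
qed

lemma chain_bdry_empty: "chain_bdry z {} = (\<Sum>u\<in>V. z {u} * Poly_Mapping.single (e u) 1)"
proof -
  have "face_sign u {u} = (face_sign u {} :: 'a)" for u :: 'v
    by (rule face_sign_insert_self)
  moreover have "face_sign u {} = (1::'a)" for u :: 'v
    by (simp add: face_sign_def)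
  ultimately show ?thesis
    unfolding chain_bdry_def by (intro sum.cong) (auto simp: vertex_face mult.commute)
qed

lemma augmentation_image:
  "(\<lambda>v. \<Sum>k<rank 0. augmentation k * v k) ` vecs n (rank 0) =
    ideal_gen n ((\<lambda>u. Poly_Mapping.single (e u) (1::'a::comm_ring_1)) ` V)"
proof -
  let ?combinations = "{\<Sum>u\<in>V. c u * Poly_Mapping.single (e u) (1::'a) | c. \<forall>u\<in>V. c u \<in> polyring n}"
  have "(\<lambda>v. \<Sum>k<rank 0. augmentation k * v k) ` vecs n (rank 0) =
      (\<lambda>z. chain_bdry z {}) ` vec_to_chain 0 ` vecs n (rank 0)"
    by (simp add: augmentation_apply image_comp comp_def)
  also have "\<dots> = (\<lambda>z. chain_bdry z {}) ` chains 1"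
    by (simp add: bij_betw_imp_surj_on[OF bij_vec_to_chain])
  also have "\<dots> = ?combinations"
  proof (intro equalityI subsetI)
    fix p assume "p \<in> (\<lambda>z. chain_bdry z {}) ` (chains 1 :: ('v set \<Rightarrow> 'a mpoly) set)"
    then obtain z where "z \<in> chains 1" "p = chain_bdry z {}" by blast
    then show "p \<in> ?combinations"
      by (auto simp: chain_bdry_empty chains_def)
  next
    fix p assume "p \<in> ?combinations"
    then obtain c where c: "p = (\<Sum>u\<in>V. c u * Poly_Mapping.single (e u) 1)" "\<forall>u\<in>V. c u \<in> polyring n"
      by blast
    define z where "z F = (if F \<in> faces_of_card 1 then c (the_elem F) else 0)" for F
    have "F \<in> faces_of_card 1 \<Longrightarrow> the_elem F \<in> V" for F
      by (auto simp: faces_of_card_def card_Suc_eq dest: face_subset_vertices)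
    then have "z \<in> chains 1"
      using c(2) by (auto simp: chains_def z_def faces_of_card_def)
    moreover have "z {u} = c u" if "u \<in> V" for u
      using that vertex_face by (simp add: z_def faces_of_card_def)
    ultimately show "p \<in> (\<lambda>z. chain_bdry z {}) ` chains 1"
      unfolding c(1) chain_bdry_empty by (intro image_eqI[of _ _ z]) auto
  qed
  also have "\<dots> = ideal_gen n ((\<lambda>u. Poly_Mapping.single (e u) 1) ` V)"
    by (rule ideal_gen_image[OF finite_vertices, symmetric])
  finally show ?thesis .
qed

lemma resolution_kernel_iff:
  assumes "v \<in> vecs n (rank i)"
  shows "(if i = 0 then (\<Sum>k<rank 0. augmentation k * v k) = 0
      else mapply (bdry_matrix i) (rank (i - 1)) (rank i) v = (\<lambda>_. 0))
    \<longleftrightarrow> chain_bdry (vec_to_chain i v) = (\<lambda>_. 0)"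
proof (cases i)
  case 0
  let ?c = "chain_bdry (vec_to_chain 0 v)"
  have c: "?c \<in> chains 0"
    using assms 0 by (intro chain_bdry_in_chains vec_to_chain_in_chains) simp
  have "?c G = 0" if "G \<noteq> {}" for G
  proof (rule ccontr)
    assume "?c G \<noteq> 0"
    with c have "G \<in> D" "card G = 0" by (auto simp: chains_def)
    with that finite_face show False by auto
  qed
  then have "?c = (\<lambda>_. 0) \<longleftrightarrow> ?c {} = 0"
    by (metis (mono_tags, lifting))
  then show ?thesis
    using 0 by (simp add: augmentation_apply)
next
  case (Suc j)
  let ?c = "chain_bdry (vec_to_chain (Suc j) v)"
  have c: "?c \<in> chains (Suc j)"
    using assms Suc by (intro chain_bdry_in_chains vec_to_chain_in_chains) simp
  have "chain_to_vec j ?c = (\<lambda>_. 0) \<longleftrightarrow> ?c = (\<lambda>_. 0)"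
  proof
    assume "chain_to_vec j ?c = (\<lambda>_. 0)"
    then have "vec_to_chain j (chain_to_vec j ?c) = vec_to_chain j (\<lambda>_. 0)"
      by simp
    then show "?c = (\<lambda>_. 0)"
      by (simp add: vec_to_chain_chain_to_vec[OF c] vec_to_chain_def fun_eq_iff)
  qed (simp add: chain_to_vec_def fun_eq_iff)
  then show ?thesis
    using Suc by (simp add: mapply_bdry_matrix)
qed

lemma resolution_kernel:
  "{v \<in> vecs n (rank i). if i = 0 then (\<Sum>k<rank 0. augmentation k * v k) = 0
      else mapply (bdry_matrix i) (rank (i - 1)) (rank i) v = (\<lambda>_. 0)}
    = chain_to_vec i ` {z \<in> chains (Suc i). chain_bdry z = (\<lambda>_. (0::'a::comm_ring_1 mpoly))}"
proof -
  have "{v \<in> vecs n (rank i). if i = 0 then (\<Sum>k<rank 0. augmentation k * v k) = 0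
      else mapply (bdry_matrix i) (rank (i - 1)) (rank i) v = (\<lambda>_. 0)}
    = {v \<in> vecs n (rank i). chain_bdry (vec_to_chain i v) = (\<lambda>_. (0::'a mpoly))}"
    using resolution_kernel_iff by blast
  also have "\<dots> = chain_to_vec i ` {z \<in> chains (Suc i). chain_bdry z = (\<lambda>_. 0)}"
  proof (intro equalityI subsetI)
    fix v assume "v \<in> {v \<in> vecs n (rank i). chain_bdry (vec_to_chain i v) = (\<lambda>_. (0::'a mpoly))}"
    then show "v \<in> chain_to_vec i ` {z \<in> chains (Suc i). chain_bdry z = (\<lambda>_. 0)}"
      using chain_to_vec_vec_to_chain vec_to_chain_in_chains
      by (intro image_eqI[of _ _ "vec_to_chain i v"]) auto
  next
    fix v assume "v \<in> chain_to_vec i ` {z \<in> chains (Suc i). chain_bdry z = (\<lambda>_. (0::'a mpoly))}"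
    then obtain z where "z \<in> chains (Suc i)" "chain_bdry z = (\<lambda>_. 0)" "v = chain_to_vec i z"
      by blast
    then show "v \<in> {v \<in> vecs n (rank i). chain_bdry (vec_to_chain i v) = (\<lambda>_. 0)}"
      by (simp add: chain_to_vec_in_vecs vec_to_chain_chain_to_vec)
  qed
  finally show ?thesis .
qed

lemma resolution_image:
  "mapply (bdry_matrix (Suc i)) (rank i) (rank (Suc i)) ` vecs n (rank (Suc i)) =
    chain_to_vec i ` chain_bdry ` chains (Suc (Suc i))"
proof -
  have "mapply (bdry_matrix (Suc i)) (rank i) (rank (Suc i)) ` vecs n (rank (Suc i)) =
      chain_to_vec i ` chain_bdry ` vec_to_chain (Suc i) ` vecs n (rank (Suc i))"
    by (simp add: mapply_bdry_matrix image_comp comp_def)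
  then show ?thesis
    by (simp add: bij_betw_imp_surj_on[OF bij_vec_to_chain])
qed

theorem free_resolution_vertex_ideal:
  assumes "\<forall>F\<in>D. card F \<le> Suc len"
  shows "free_resolution n (ideal_gen n ((\<lambda>v. Poly_Mapping.single (e v) (1::'a::comm_ring_1)) ` V))
    len rank bdry_matrix (augmentation :: nat \<Rightarrow> 'a mpoly)"
  unfolding free_resolution_def
proof (intro conjI ballI allI impI)
  show "bdry_matrix i j k \<in> polyring n" if "k < rank i" for i j k
    using face_enum_in[OF that] by (simp add: bdry_matrix_def bdry_coeff_polyring faces_of_card_def)
  show "augmentation k \<in> polyring n" if "k < rank 0" for k
    using face_enum_in[OF that] by (simp add: augmentation_def bdry_coeff_polyring faces_of_card_def)
  show "(\<lambda>v. \<Sum>k<rank 0. augmentation k * v k) ` vecs n (rank 0) =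
      ideal_gen n ((\<lambda>v. Poly_Mapping.single (e v) 1) ` V)"
    by (rule augmentation_image)
next
  fix i assume "i \<le> len"
  show "{v \<in> vecs n (rank i). if i = 0 then (\<Sum>k<rank 0. augmentation k * v k) = 0
      else mapply (bdry_matrix i) (rank (i - 1)) (rank i) v = (\<lambda>_. 0)} =
    (if i < len then mapply (bdry_matrix (Suc i)) (rank i) (rank (Suc i)) ` vecs n (rank (Suc i))
     else {\<lambda>_. 0})"
  proof (cases "i < len")
    case True
    then show ?thesis
      by (simp add: resolution_kernel resolution_image chain_exact)
  next
    case False
    with \<open>i \<le> len\<close> have "i = len" by simp
    then show ?thesis
      unfolding resolution_kernel \<open>i = len\<close> cycles_top_dim[OF assms]
      by (simp add: chain_to_vec_def fun_eq_iff)
  qed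
qed

corollary pd_vertex_ideal_le:
  assumes "\<forall>F\<in>D. card F \<le> Suc len"
  shows "pd n (ideal_gen n ((\<lambda>v. Poly_Mapping.single (e v) (1::'a::comm_ring_1)) ` V)) \<le> len"
  unfolding pd_def by (rule Least_le) (use free_resolution_vertex_ideal[OF assms] in blast)

end

section \<open>The complex \<open>M\<^sub>q\<^sup>2\<close>\<close>

definition Mq2_vertices :: "nat \<Rightarrow> (nat \<times> nat) set" where
  "Mq2_vertices q = {(a, b). 1 \<le> a \<and> a \<le> b \<and> b \<le> q}"

lemma Mq2_iff:
  assumes "1 \<le> q"
  shows "F \<in> Mq2 q \<longleftrightarrow> F \<subseteq> Mq2_vertices q \<and> (\<forall>i j. (i, i) \<in> F \<longrightarrow> (j, j) \<in> F \<longrightarrow> i = j)"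
proof
  assume "F \<in> Mq2 q"
  then obtain i where i: "i \<in> {1..q}" "F \<subseteq> Mq2_facet q i"
    by (auto simp: Mq2_def)
  moreover have "Mq2_facet q i \<subseteq> Mq2_vertices q"
    using i(1) by (auto simp: Mq2_facet_def Mq2_vertices_def)
  moreover have "j = i" if "(j, j) \<in> Mq2_facet q i" for j
    using that by (simp add: Mq2_facet_def)
  ultimately show "F \<subseteq> Mq2_vertices q \<and> (\<forall>i j. (i, i) \<in> F \<longrightarrow> (j, j) \<in> F \<longrightarrow> i = j)"
    by blast
next
  assume F: "F \<subseteq> Mq2_vertices q \<and> (\<forall>i j. (i, i) \<in> F \<longrightarrow> (j, j) \<in> F \<longrightarrow> i = j)"
  obtain i where i: "i \<in> {1..q}" "\<And>j. (j, j) \<in> F \<Longrightarrow> j = i"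
  proof (cases "\<exists>i. (i, i) \<in> F")
    case True
    then obtain i where "(i, i) \<in> F" by blast
    moreover from this F have "i \<in> {1..q}"
      by (auto simp: Mq2_vertices_def)
    ultimately show ?thesis
      using F by (intro that[of i]) blast+
  next
    case False
    then show ?thesis
      using assms by (intro that[of 1]) auto
  qed
  have "p \<in> Mq2_facet q i" if "p \<in> F" for p
  proof -
    obtain a c where p: "p = (a, c)" "1 \<le> a" "a \<le> c" "c \<le> q"
      using \<open>p \<in> F\<close> F by (cases p) (auto simp: Mq2_vertices_def)
    show ?thesis
    proof (cases "a = c")
      case True
      then show ?thesis
        using i(2)[of a] \<open>p \<in> F\<close> p(1) by (simp add: Mq2_facet_def)
    next
      case False
      then show ?thesis
        using p by (simp add: Mq2_facet_def)
    qed
  qed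
  with i(1) show "F \<in> Mq2 q"
    unfolding Mq2_def by blast
qed

lemma finite_off_diagonal: "finite {(a, b). 1 \<le> a \<and> a < b \<and> b \<le> (q::nat)}"
  by (rule finite_subset[of _ "{..q} \<times> {..q}"]) auto

lemma card_off_diagonal: "card {(a, b). 1 \<le> a \<and> a < b \<and> b \<le> q} = q choose 2"
proof (induction q)
  case (Suc q)
  have "{(a, b). 1 \<le> a \<and> a < b \<and> b \<le> Suc q} =
      {(a, b). 1 \<le> a \<and> a < b \<and> b \<le> q} \<union> (\<lambda>a. (a, Suc q)) ` {1..q}"
    by auto
  moreover have "{(a, b). 1 \<le> a \<and> a < b \<and> b \<le> q} \<inter> (\<lambda>a. (a, Suc q)) ` {1..q} = {}"
    by auto
  moreover have "card ((\<lambda>a. (a, Suc q)) ` {1..q}) = q"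
    by (simp add: card_image inj_on_def)
  ultimately have "card {(a, b). 1 \<le> a \<and> a < b \<and> b \<le> Suc q} = (q choose 2) + q"
    using Suc finite_off_diagonal[of q] by (simp add: card_Un_disjoint)
  also have "\<dots> = Suc q choose 2"
    by (simp add: numeral_2_eq_2 binomial_Suc_Suc)
  finally show ?case .
next
  case 0
  have empty: "{(a, b). 1 \<le> a \<and> a < b \<and> b \<le> (0::nat)} = {}"
    by auto
  show ?case by (subst empty) simp
qed

lemma card_Mq2_facet: "card (Mq2_facet q i) = Suc (q choose 2)"
  unfolding Mq2_facet_def using finite_off_diagonal[of q] card_off_diagonal[of q] by simp

lemma finite_if_Mq2: "F \<in> Mq2 q \<Longrightarrow> finite F"
  using finite_off_diagonal[of q] by (auto simp: Mq2_def Mq2_facet_def intro: finite_subset)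

lemma card_le_if_Mq2: "F \<in> Mq2 q \<Longrightarrow> card F \<le> Suc (q choose 2)"
  using finite_off_diagonal[of q] card_Mq2_facet
  by (auto simp: Mq2_def Mq2_facet_def intro: card_mono[THEN order.trans])

lemma sc_dim_Mq2:
  assumes "1 \<le> q"
  shows "sc_dim (Mq2 q) = int (q choose 2)"
proof -
  have "Max (card ` Mq2 q) = Suc (q choose 2)"
  proof (rule Max_eqI)
    show "finite (card ` Mq2 q)"
      by (rule finite_subset[of _ "{..Suc (q choose 2)}"]) (auto dest: card_le_if_Mq2)
    show "k \<le> Suc (q choose 2)" if "k \<in> card ` Mq2 q" for k
      using that card_le_if_Mq2 by blast
    have "Mq2_facet q 1 \<in> Mq2 q"
      using assms by (auto simp: Mq2_def)
    then show "Suc (q choose 2) \<in> card ` Mq2 q"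
      using card_Mq2_facet by (metis image_eqI)
  qed
  then show ?thesis
    by (simp add: sc_dim_def)
qed

lemma empty_or_singleton_or_less_pair:
  fixes S :: "'a::linorder set"
  obtains (pair) i j where "i \<in> S" "j \<in> S" "i < j"
    | (singleton) i where "S = {i}"
    | (empty) "S = {}"
proof (cases "S = {}")
  case False
  then obtain i where i: "i \<in> S" by blast
  show thesis
  proof (cases "S = {i}")
    case False
    with i obtain j where "j \<in> S" "j \<noteq> i" by blast
    with i show thesis
      using pair by (metis linorder_neqE)
  qed (rule singleton)
qed (rule empty)

lemma Mq2_cone_below:
  fixes m :: "nat \<Rightarrow> (nat \<Rightarrow>\<^sub>0 nat)"
  assumes q: "1 \<le> q"
    and F: "F \<in> Mq2 q" "F \<noteq> {}" "exp_dvd (lcm_label (\<lambda>(i, j). m i + m j) F) b"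
  shows "\<exists>v\<in>Mq2_vertices q. \<forall>G\<in>Mq2 q. exp_dvd (lcm_label (\<lambda>(i, j). m i + m j) G) b \<longrightarrow>
    insert v G \<in> Mq2 q \<and> exp_dvd (lcm_label (\<lambda>(i, j). m i + m j) (insert v G)) b"
proof -
  let ?e = "\<lambda>(i, j). m i + m j"
  define squares where "squares = {i \<in> {1..q}. exp_dvd (m i + m i) b}"
  have insert_off_diagonal: "insert (a, c) G \<in> Mq2 q" if "G \<in> Mq2 q" "(a, c) \<in> Mq2_vertices q" "a \<noteq> c" for G a c
    using that by (simp add: Mq2_iff[OF q])
  have lcm_insert: "exp_dvd (lcm_label ?e (insert v G)) b \<longleftrightarrow> exp_dvd (?e v) b \<and> exp_dvd (lcm_label ?e G) b"
    if "G \<in> Mq2 q" for G v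
    using finite_if_Mq2[OF that] by (simp add: exp_dvd_lcm_label_iff)
  have diagonal_below: "i \<in> squares" if "G \<in> Mq2 q" "exp_dvd (lcm_label ?e G) b" "(i, i) \<in> G" for G i
    using that exp_dvd_lcm_label_iff[OF finite_if_Mq2[OF that(1)], of ?e b]
    by (auto simp: squares_def Mq2_iff[OF q] Mq2_vertices_def)
  show ?thesis
  proof (cases squares rule: empty_or_singleton_or_less_pair)
    case (pair i j)
    then have "(i, j) \<in> Mq2_vertices q" "exp_dvd (?e (i, j)) b"
      by (auto simp: squares_def Mq2_vertices_def intro: exp_dvd_add_self)
    then show ?thesis
      using pair insert_off_diagonal lcm_insert by (intro bexI[of _ "(i, j)"]) auto
  next
    case (singleton i)
    then have "(i, i) \<in> Mq2_vertices q" "exp_dvd (?e (i, i)) b"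
      by (auto simp: squares_def Mq2_vertices_def)
    moreover have "insert (i, i) G \<in> Mq2 q" if "G \<in> Mq2 q" "exp_dvd (lcm_label ?e G) b" for G
      using that diagonal_below[OF that] singleton \<open>(i, i) \<in> Mq2_vertices q\<close>
      by (auto simp: Mq2_iff[OF q])
    ultimately show ?thesis
      using lcm_insert by (intro bexI[of _ "(i, i)"]) auto
  next
    case empty
    obtain a c where "(a, c) \<in> F"
      using F(2) by auto
    then have "a \<noteq> c" "(a, c) \<in> Mq2_vertices q" "exp_dvd (?e (a, c)) b"
      using empty diagonal_below[OF F(1,3)] F exp_dvd_lcm_label_iff[OF finite_if_Mq2[OF F(1)], of ?e b]
      by (auto simp: Mq2_iff[OF q])
    then show ?thesis
      using insert_off_diagonal lcm_insert by (intro bexI[of _ "(a, c)"]) auto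
  qed
qed

lemma cone_labelled_complex_Mq2:
  assumes "1 \<le> q" and keys_m: "\<And>i. i \<in> {1..q} \<Longrightarrow> Poly_Mapping.keys (m i) \<subseteq> {..<n}"
  shows "cone_labelled_complex (Mq2_vertices q) (Mq2 q) (\<lambda>(i, j). m i + m j) n"
proof
  show "finite (Mq2_vertices q)"
    by (rule finite_subset[of _ "{..q} \<times> {..q}"]) (auto simp: Mq2_vertices_def)
  show "F \<subseteq> Mq2_vertices q" if "F \<in> Mq2 q" for F
    using that by (simp add: Mq2_iff[OF assms(1)])
  show "G \<in> Mq2 q" if "F \<in> Mq2 q" "G \<subseteq> F" for F G
    using that by (auto simp: Mq2_iff[OF assms(1)])
  show "{} \<in> Mq2 q"
    by (simp add: Mq2_iff[OF assms(1)])
  show "{v} \<in> Mq2 q" if "v \<in> Mq2_vertices q" for v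
    using that by (auto simp: Mq2_iff[OF assms(1)])
  show "Poly_Mapping.keys ((\<lambda>(i, j). m i + m j) v) \<subseteq> {..<n}" if v: "v \<in> Mq2_vertices q" for v
  proof -
    obtain i j where "v = (i, j)" "i \<in> {1..q}" "j \<in> {1..q}"
      using v unfolding Mq2_vertices_def by (cases v) auto
    then show ?thesis
      using keys_m by (simp add: keys_add_exp)
  qed
qed (rule Mq2_cone_below[OF assms(1)])

lemma products_of_monomials:
  fixes m :: "nat \<Rightarrow> (nat \<Rightarrow>\<^sub>0 nat)"
  shows "{a * b | a b. a \<in> (\<lambda>i. Poly_Mapping.single (m i) (1::'a::comm_ring_1)) ` {1..q} \<and>
      b \<in> (\<lambda>i. Poly_Mapping.single (m i) 1) ` {1..q}}
    = (\<lambda>(i, j). Poly_Mapping.single (m i + m j) 1) ` Mq2_vertices q"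
proof (intro equalityI subsetI)
  fix p assume "p \<in> {a * b | a b. a \<in> (\<lambda>i. Poly_Mapping.single (m i) (1::'a)) ` {1..q} \<and>
      b \<in> (\<lambda>i. Poly_Mapping.single (m i) 1) ` {1..q}}"
  then obtain i j where ij: "i \<in> {1..q}" "j \<in> {1..q}"
    and p: "p = Poly_Mapping.single (m i + m j) 1"
    by (auto simp: mult_single)
  then have "(min i j, max i j) \<in> Mq2_vertices q"
    by (auto simp: Mq2_vertices_def)
  moreover have "p = Poly_Mapping.single (m (min i j) + m (max i j)) 1"
    by (simp add: p min_def max_def add.commute)
  ultimately show "p \<in> (\<lambda>(i, j). Poly_Mapping.single (m i + m j) 1) ` Mq2_vertices q"
    by (auto intro!: image_eqI)
next
  fix p assume "p \<in> (\<lambda>(i, j). Poly_Mapping.single (m i + m j) (1::'a)) ` Mq2_vertices q"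
  then obtain v where v: "v \<in> Mq2_vertices q" "p = (\<lambda>(i, j). Poly_Mapping.single (m i + m j) 1) v"
    by (rule imageE)
  obtain i j where "v = (i, j)"
    by (cases v)
  with v have ij: "i \<in> {1..q}" "j \<in> {1..q}"
    and p: "p = Poly_Mapping.single (m i) 1 * Poly_Mapping.single (m j) 1"
    by (auto simp: Mq2_vertices_def mult_single)
  have "Poly_Mapping.single (m i) 1 \<in> (\<lambda>i. Poly_Mapping.single (m i) (1::'a)) ` {1..q}"
    "Poly_Mapping.single (m j) 1 \<in> (\<lambda>i. Poly_Mapping.single (m i) (1::'a)) ` {1..q}"
    using ij by auto
  with p show "p \<in> {a * b | a b. a \<in> (\<lambda>i. Poly_Mapping.single (m i) 1) ` {1..q} \<and>
      b \<in> (\<lambda>i. Poly_Mapping.single (m i) 1) ` {1..q}}"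
    by blast
qed

lemma monomials_enumeration:
  assumes "finite G" "card G = q" "G \<subseteq> monomials n"
  obtains m where "G = (\<lambda>i. Poly_Mapping.single (m i) (1::'a::comm_ring_1)) ` {1..q}"
    and "\<And>i. i \<in> {1..q} \<Longrightarrow> Poly_Mapping.keys (m i) \<subseteq> {..<n}"
proof -
  obtain h where h: "bij_betw h {1..q} G"
    using ex_bij_betw_nat_finite_1[OF assms(1)] assms(2) by blast
  have "\<forall>i\<in>{1..q}. \<exists>d. h i = Poly_Mapping.single d 1 \<and> Poly_Mapping.keys d \<subseteq> {..<n}"
    using h assms(3) by (auto simp: bij_betw_def monomials_def)
  then obtain m where m: "\<And>i. i \<in> {1..q} \<Longrightarrow> h i = Poly_Mapping.single (m i) 1 \<and> Poly_Mapping.keys (m i) \<subseteq> {..<n}"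
    by metis
  have "G = h ` {1..q}"
    using h by (simp add: bij_betw_def)
  also have "\<dots> = (\<lambda>i. Poly_Mapping.single (m i) 1) ` {1..q}"
    using m by (intro image_cong) auto
  finally show ?thesis
    using m that by blast
qed

theorem corollary3p8:
  fixes n q :: nat and I G :: "'a::field mpoly set"
  assumes "1 \<le> q"
    and "finite G" and "card G = q" and "G \<subseteq> monomials n"
    and "I = ideal_gen n G"
    and "\<forall>G'. G' \<subset> G \<longrightarrow> ideal_gen n G' \<noteq> I"
  shows "int (pd n (ideal_sq n I)) \<le> sc_dim (Mq2 q) \<and> sc_dim (Mq2 q) = int (q choose 2)"
proof -
  obtain m where G: "G = (\<lambda>i. Poly_Mapping.single (m i) 1) ` {1..q}"
    and keys_m: "\<And>i. i \<in> {1..q} \<Longrightarrow> Poly_Mapping.keys (m i) \<subseteq> {..<n}"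
    using monomials_enumeration[OF assms(2-4)] by blast
  interpret Mq2_complex: cone_labelled_complex "Mq2_vertices q" "Mq2 q" "\<lambda>(i, j). m i + m j" n
    using assms(1) keys_m by (rule cone_labelled_complex_Mq2)
  have "ideal_sq n I = ideal_gen n ((\<lambda>v. Poly_Mapping.single ((\<lambda>(i, j). m i + m j) v) 1) ` Mq2_vertices q)"
    unfolding assms(5) ideal_sq_ideal_gen G products_of_monomials
    by (simp add: case_prod_beta)
  moreover have "\<forall>F\<in>Mq2 q. card F \<le> Suc (q choose 2)"
    using card_le_if_Mq2 by blast
  ultimately have "pd n (ideal_sq n I) \<le> q choose 2"
    using Mq2_complex.pd_vertex_ideal_le by simp
  with sc_dim_Mq2[OF assms(1)] show ?thesis
    by simp
qed

end
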